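(* Let $M$ be a finite abelian group and $J$ a Jacobi function on $M$, and set $J^*(\alpha,\beta)=-\delta(\alpha)-\delta(\beta)+J(\alpha,\beta)$. Then $J^*(1,\alpha)\neq0$ for every non-trivial $\alpha\in M$.
   Context: $M$ is written multiplicatively with identity $1$; $\delta(\alpha)=1$ if $\alpha=1$ and $0$ otherwise. A Jacobi function on $M$ is a function $J\colon M\times M\to\mathbf{C}$ satisfying: (A) $J(\alpha,\beta)=J(\beta,\alpha)$; (B) $J^*(\alpha,\beta)J^*(\alpha\beta,\gamma)=J^*(\alpha,\beta\gamma)J^*(\beta,\gamma)$; (C) $\sum_{\beta\in M}J(\alpha_1\beta,\alpha_2\beta^{-1})J(\alpha_3\beta,\alpha_4\beta^{-1})=J(\alpha_1\alpha_4,\alpha_2\alpha_3)$; all for all elements of $M$. *)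

theory Defs
  imports "HOL-Algebra.Group" "HOL-Analysis.Analysis"
begin

definition jdelta :: "('a, 'b) monoid_scheme \<Rightarrow> 'a \<Rightarrow> complex" where
  "jdelta G a = (if a = \<one>\<^bsub>G\<^esub> then 1 else 0)"

definition jstar :: "('a, 'b) monoid_scheme \<Rightarrow> ('a \<Rightarrow> 'a \<Rightarrow> complex) \<Rightarrow> 'a \<Rightarrow> 'a \<Rightarrow> complex" where
  "jstar G J a b = - jdelta G a - jdelta G b + J a b"

definition jacobi_function :: "('a, 'b) monoid_scheme \<Rightarrow> ('a \<Rightarrow> 'a \<Rightarrow> complex) \<Rightarrow> bool" where
  "jacobi_function G J \<longleftrightarrow>
     (\<forall>a\<in>carrier G. \<forall>b\<in>carrier G. J a b = J b a) \<and>
     (\<forall>a\<in>carrier G. \<forall>b\<in>carrier G. \<forall>c\<in>carrier G.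
        jstar G J a b * jstar G J (a \<otimes>\<^bsub>G\<^esub> b) c
          = jstar G J a (b \<otimes>\<^bsub>G\<^esub> c) * jstar G J b c) \<and>
     (\<forall>a1\<in>carrier G. \<forall>a2\<in>carrier G. \<forall>a3\<in>carrier G. \<forall>a4\<in>carrier G.
        (\<Sum>b\<in>carrier G. J (a1 \<otimes>\<^bsub>G\<^esub> b) (a2 \<otimes>\<^bsub>G\<^esub> inv\<^bsub>G\<^esub> b)
                          * J (a3 \<otimes>\<^bsub>G\<^esub> b) (a4 \<otimes>\<^bsub>G\<^esub> inv\<^bsub>G\<^esub> b))
          = J (a1 \<otimes>\<^bsub>G\<^esub> a4) (a2 \<otimes>\<^bsub>G\<^esub> a3))"

end

(* Enumerate M as e_0, ..., e_(n-1) and let T_p be the n x n matrix with entries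
   J(e_i e_j^-1, p e_j e_i^-1). Symmetry (A) and the summation identity (C) say exactly that
   T_p T_q = T_(pq). If J*(1, alpha) = 0, i.e.
   J(1, alpha) = 1, then tr T_alpha = n and T_alpha^(n+1) = T_alpha. The latter rules out
   Jordan blocks of size > 1 and makes every eigenvalue 0 or a root of unity; since the n
   eigenvalues sum to n, they all equal 1, so T_alpha is the identity matrix. But its entry
   in row alpha, column 1 is J(alpha, 1) = J(1, alpha) = 1. *)

theory Submission
  imports Defs "Jordan_Normal_Form.Jordan_Normal_Form_Existence" "HOL-Algebra.Multiplicative_Group"
begin

definition trace_mat :: "'a :: comm_semiring_0 mat \<Rightarrow> 'a" where
  "trace_mat A = sum_list (diag_mat A)"

lemma trace_mat_eq_sum: "trace_mat A = (\<Sum>i<dim_row A. A $$ (i, i))"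
  unfolding trace_mat_def diag_mat_def by (simp add: sum_list_sum_nth atLeast0LessThan)

lemma trace_mat_mult_comm:
  fixes A B :: "'a :: comm_semiring_0 mat"
  assumes "A \<in> carrier_mat n m" and "B \<in> carrier_mat m n"
  shows "trace_mat (A * B) = trace_mat (B * A)"
proof -
  have "trace_mat (A * B) = (\<Sum>i<n. \<Sum>k<m. A $$ (i, k) * B $$ (k, i))"
    using assms by (auto simp: trace_mat_eq_sum scalar_prod_def atLeast0LessThan intro!: sum.cong)
  also have "\<dots> = (\<Sum>k<m. \<Sum>i<n. B $$ (k, i) * A $$ (i, k))"
    by (subst sum.swap) (simp add: mult.commute)
  also have "\<dots> = trace_mat (B * A)"
    using assms by (auto simp: trace_mat_eq_sum scalar_prod_def atLeast0LessThan intro!: sum.cong)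
  finally show ?thesis .
qed

lemma similar_mat_wit_trace_mat:
  fixes A B :: "'a :: comm_ring_1 mat"
  assumes "similar_mat_wit A B P Q"
  shows "trace_mat A = trace_mat B"
proof -
  obtain n where B: "B \<in> carrier_mat n n" and P: "P \<in> carrier_mat n n" and Q: "Q \<in> carrier_mat n n"
    and QP: "Q * P = 1\<^sub>m n" and A: "A = P * B * Q"
    using similar_mat_witD[OF refl assms] by blast
  have "trace_mat A = trace_mat (Q * (P * B))"
    unfolding A using B P Q by (intro trace_mat_mult_comm) auto
  also have "Q * (P * B) = B"
    using B P Q QP by (simp add: assoc_mult_mat[symmetric])
  finally show ?thesis .
qed

lemma diag_mat_jordan_matrix:
  "diag_mat (jordan_matrix n_as) = concat (map (\<lambda>(m, a). replicate m a) n_as)"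
proof (induction n_as)
  case Nil
  show ?case by (simp add: jordan_matrix_def diag_mat_def)
next
  case (Cons na n_as)
  obtain m a where na: "na = (m, a)" by force
  have "diag_mat (jordan_block m a) = replicate m a"
    by (intro nth_equalityI) (auto simp: diag_mat_def)
  then show ?case
    using Cons by (simp add: na jordan_matrix_Cons diag_four_block_mat[of _ m _ "sum_list (map fst n_as)"])
qed

lemma trace_mat_jordan_matrix:
  "trace_mat (jordan_matrix n_as) = (\<Sum>(m, a)\<leftarrow>n_as. of_nat m * a)"
  unfolding trace_mat_def diag_mat_jordan_matrix
  by (induction n_as) (auto simp: sum_list_replicate)

lemma four_block_mat_0_0_eqD:
  assumes "A \<in> carrier_mat n1 n1" "A' \<in> carrier_mat n1 n1"
    and "D \<in> carrier_mat n2 n2" "D' \<in> carrier_mat n2 n2"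
    and eq: "four_block_mat A (0\<^sub>m n1 n2) (0\<^sub>m n2 n1) D = four_block_mat A' (0\<^sub>m n1 n2) (0\<^sub>m n2 n1) D'"
  shows "A = A'" and "D = D'"
proof -
  have entry: "four_block_mat A (0\<^sub>m n1 n2) (0\<^sub>m n2 n1) D $$ (i, j)
    = four_block_mat A' (0\<^sub>m n1 n2) (0\<^sub>m n2 n1) D' $$ (i, j)" for i j
    using eq by simp
  show "A = A'"
  proof (rule eq_matI)
    show "A $$ (i, j) = A' $$ (i, j)" if "i < dim_row A'" "j < dim_col A'" for i j
      using entry[of i j] that assms(1-4) by simp
  qed (use assms in auto)
  show "D = D'"
  proof (rule eq_matI)
    show "D $$ (i, j) = D' $$ (i, j)" if "i < dim_row D'" "j < dim_col D'" for i j
      using entry[of "i + n1" "j + n1"] that assms(1-4) by simp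
  qed (use assms in auto)
qed

lemma jordan_matrix_pow_eq_selfD:
  assumes "jordan_matrix n_as ^\<^sub>m k = jordan_matrix n_as" and "(m, a) \<in> set n_as"
  shows "jordan_block m a ^\<^sub>m k = jordan_block m a"
  using assms
proof (induction n_as)
  case Nil
  then show ?case by simp
next
  case (Cons nb n_as)
  obtain l b where nb: "nb = (l, b)" by force
  let ?n = "sum_list (map fst n_as)"
  have "four_block_mat (jordan_block l b ^\<^sub>m k) (0\<^sub>m l ?n) (0\<^sub>m ?n l) (jordan_matrix n_as ^\<^sub>m k)
      = four_block_mat (jordan_block l b) (0\<^sub>m l ?n) (0\<^sub>m ?n l) (jordan_matrix n_as)"
    using Cons.prems(1) by (simp add: nb jordan_matrix_Cons pow_four_block_mat)
  from four_block_mat_0_0_eqD[OF _ _ _ _ this]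
  have "jordan_block l b ^\<^sub>m k = jordan_block l b" "jordan_matrix n_as ^\<^sub>m k = jordan_matrix n_as"
    by auto
  then show ?case
    using Cons by (auto simp: nb)
qed

lemma jordan_block_pow_Suc_eq_selfD:
  fixes a :: "'a :: {idom, ring_char_0}"
  assumes "jordan_block m a ^\<^sub>m Suc N = jordan_block m a" and "0 < m" and "0 < N"
  shows "m = 1" and "a ^ Suc N = a"
proof -
  have entry: "(jordan_block m a ^\<^sub>m Suc N) $$ (i, j) = jordan_block m a $$ (i, j)" for i j
    using assms(1) by simp
  note entry = entry[unfolded jordan_block_pow]
  show "a ^ Suc N = a"
    using entry[of 0 0] assms(2) by simp
  show "m = 1"
  proof (rule ccontr)
    assume "m \<noteq> 1"
    with entry[of 0 1] assms(2) have superdiag: "of_nat (Suc N) * a ^ N = 1"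
      by simp
    then have "of_nat (Suc N) * a ^ Suc N = a"
      by (metis mult.assoc mult.commute mult_1 power_Suc)
    then have "of_nat (Suc N) * a = a"
      by (simp only: \<open>a ^ Suc N = a\<close>)
    then have "a = 0"
      using assms(3) by (simp add: algebra_simps)
    with assms(3) superdiag show False
      by (simp add: power_0_left)
  qed
qed

lemma norm_le_one_if_power_Suc_eq_self:
  fixes a :: "'a :: real_normed_div_algebra"
  assumes "a ^ Suc N = a" and "0 < N"
  shows "norm a \<le> 1"
proof (cases "a = 0")
  case False
  with assms(1) have "a ^ N = 1"
    by (metis mult_cancel_right1 power_Suc2)
  then have "norm a ^ N = 1"
    by (metis norm_one norm_power)
  with assms(2) have "norm a = 1"
    by (intro power_eq_imp_eq_base[of "norm a" N 1]) simp_all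
  then show ?thesis
    by simp
qed simp

lemma complex_eq_one_if_norm_le_one_Re_eq_one:
  assumes "cmod z \<le> 1" and "Re z = 1"
  shows "z = 1"
proof -
  have "(Re z)\<^sup>2 + (Im z)\<^sup>2 \<le> 1"
    using assms(1) by (metis cmod_power2 norm_ge_zero power_le_one)
  with assms(2) show ?thesis
    by (simp add: complex_eq_iff)
qed

lemma sum_list_eq_length_imp_all_one:
  fixes xs :: "complex list"
  assumes norms: "\<forall>z\<in>set xs. cmod z \<le> 1" and sum: "sum_list xs = of_nat (length xs)"
  shows "\<forall>z\<in>set xs. z = 1"
proof
  fix z assume z: "z \<in> set xs"
  have Re_le: "Re w \<le> 1" if "w \<in> set xs" for w
    using norms that complex_Re_le_cmod[of w] by fastforce
  have "sum_list (map (\<lambda>w. 1 - Re w) xs) = of_nat (length xs) - Re (sum_list xs)"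
    by (induction xs) auto
  also have "\<dots> = 0"
    using sum by simp
  finally have "\<forall>w\<in>set xs. 1 - Re w = 0"
    using Re_le by (subst (asm) sum_list_nonneg_eq_0_iff) auto
  with z norms show "z = 1"
    by (auto intro: complex_eq_one_if_norm_le_one_Re_eq_one)
qed

lemma jordan_matrix_replicate_one:
  "jordan_matrix (replicate k (1, 1 :: 'a :: {zero, one})) = 1\<^sub>m k"
proof (induction k)
  case 0
  show ?case by (auto simp: jordan_matrix_def intro: eq_matI)
next
  case (Suc k)
  have block: "jordan_block 1 1 = 1\<^sub>m 1"
    by (rule eq_matI) auto
  have dim: "sum_list (map fst (replicate k (1 :: nat, 1 :: 'a))) = k"
    by (simp add: sum_list_replicate)
  have "jordan_matrix (replicate (Suc k) (1, 1 :: 'a))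
      = four_block_mat (1\<^sub>m 1) (0\<^sub>m 1 k) (0\<^sub>m k 1) (1\<^sub>m k)"
    unfolding replicate_Suc jordan_matrix_Cons dim block Suc ..
  then show ?case
    by (simp add: four_block_one_mat)
qed

lemma jordan_nf_pow_Suc_eq_selfD:
  fixes A :: "'a :: {idom, ring_char_0} mat"
  assumes "jordan_nf A n_as" and pow: "A ^\<^sub>m Suc N = A" and N: "0 < N"
    and block: "(m, a) \<in> set n_as"
  shows "m = 1" and "a ^ Suc N = a"
proof -
  obtain P Q where wit: "similar_mat_wit A (jordan_matrix n_as) P Q"
    and block_sizes: "0 \<notin> fst ` set n_as"
    using assms(1) unfolding jordan_nf_def similar_mat_def by blast
  have J_pow: "jordan_matrix n_as ^\<^sub>m k = Q * A ^\<^sub>m k * P" for k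
    by (rule similar_mat_wit_pow_id[OF similar_mat_wit_sym[OF wit]])
  have "jordan_matrix n_as ^\<^sub>m Suc N = jordan_matrix n_as"
    using J_pow[of "Suc N"] J_pow[of 1] pow by simp
  moreover have "0 < m"
    using block_sizes block by (metis gr0I fst_conv image_eqI)
  ultimately show "m = 1" and "a ^ Suc N = a"
    using jordan_block_pow_Suc_eq_selfD[OF jordan_matrix_pow_eq_selfD[OF _ block] _ N] by auto
qed

lemma one_mat_if_pow_Suc_eq_self_trace_eq_dim:
  fixes A :: "complex mat"
  assumes A: "A \<in> carrier_mat n n" and N: "0 < N" and pow: "A ^\<^sub>m Suc N = A"
    and trace: "trace_mat A = of_nat n"
  shows "A = 1\<^sub>m n"
proof -
  obtain n_as where jnf: "jordan_nf A n_as"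
    using jordan_nf_exists[OF A] char_poly_factorized[OF A] by blast
  then obtain P Q where wit: "similar_mat_wit A (jordan_matrix n_as) P Q"
    unfolding jordan_nf_def similar_mat_def by blast
  let ?J = "jordan_matrix n_as"
  note blocks = jordan_nf_pow_Suc_eq_selfD[OF jnf pow N]
  have unit_block: "fst x = 1" if "x \<in> set n_as" for x
    using blocks(1)[of "fst x" "snd x"] that by simp
  then have "map fst n_as = replicate (length n_as) 1"
    by (metis length_map replicate_length_same imageE set_map)
  then have n: "n = length n_as"
    using carrier_matD(1)[OF similar_mat_witD2(5)[OF A wit]] by (simp add: sum_list_replicate)
  have "(case x of (m, a) \<Rightarrow> of_nat m * a) = snd x" if "x \<in> set n_as" for x :: "nat \<times> complex"
    using unit_block[OF that] by (cases x) simp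
  then have "trace_mat ?J = sum_list (map snd n_as)"
    unfolding trace_mat_jordan_matrix by (metis (no_types, lifting) map_eq_conv)
  with similar_mat_wit_trace_mat[OF wit] trace n
  have "sum_list (map snd n_as) = of_nat (length (map snd n_as))"
    by simp
  moreover have "\<forall>a\<in>set (map snd n_as). cmod a \<le> 1"
  proof
    fix a assume "a \<in> set (map snd n_as)"
    then obtain m where "(m, a) \<in> set n_as"
      by auto
    then show "cmod a \<le> 1"
      by (rule norm_le_one_if_power_Suc_eq_self[OF blocks(2) N])
  qed
  ultimately have eigenvalues: "\<forall>a\<in>set (map snd n_as). a = 1"
    by (rule sum_list_eq_length_imp_all_one[rotated])
  have "x = (1, 1)" if "x \<in> set n_as" for x
    using unit_block[OF that] eigenvalues that by (simp add: prod_eq_iff)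
  then have "n_as = replicate n (1, 1)"
    unfolding n by (metis replicate_length_same)
  then have "?J = 1\<^sub>m n"
    by (simp only: jordan_matrix_replicate_one)
  with similar_mat_witD2[OF A wit] show ?thesis
    by simp
qed

lemma jacobi_function_commute:
  assumes "jacobi_function G J" and "a \<in> carrier G" and "b \<in> carrier G"
  shows "J a b = J b a"
  using assms unfolding jacobi_function_def by blast

lemma jacobi_function_convolution:
  assumes "jacobi_function G J"
    and "a1 \<in> carrier G" "a2 \<in> carrier G" "a3 \<in> carrier G" "a4 \<in> carrier G"
  shows "(\<Sum>b\<in>carrier G. J (a1 \<otimes>\<^bsub>G\<^esub> b) (a2 \<otimes>\<^bsub>G\<^esub> inv\<^bsub>G\<^esub> b)
                        * J (a3 \<otimes>\<^bsub>G\<^esub> b) (a4 \<otimes>\<^bsub>G\<^esub> inv\<^bsub>G\<^esub> b))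
         = J (a1 \<otimes>\<^bsub>G\<^esub> a4) (a2 \<otimes>\<^bsub>G\<^esub> a3)"
  using assms unfolding jacobi_function_def by blast

definition jacobi_matrix ::
  "('a, 'b) monoid_scheme \<Rightarrow> ('a \<Rightarrow> 'a \<Rightarrow> complex) \<Rightarrow> (nat \<Rightarrow> 'a) \<Rightarrow> nat \<Rightarrow> 'a \<Rightarrow> complex mat"
  where "jacobi_matrix G J e n p =
    mat n n (\<lambda>(i, j). J (e i \<otimes>\<^bsub>G\<^esub> inv\<^bsub>G\<^esub> e j) (p \<otimes>\<^bsub>G\<^esub> e j \<otimes>\<^bsub>G\<^esub> inv\<^bsub>G\<^esub> e i))"

lemma jacobi_matrix_dim [simp]:
  "dim_row (jacobi_matrix G J e n p) = n" "dim_col (jacobi_matrix G J e n p) = n"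
  unfolding jacobi_matrix_def by simp_all

lemma jacobi_matrix_carrier [simp]: "jacobi_matrix G J e n p \<in> carrier_mat n n"
  unfolding carrier_mat_def by simp

lemma jacobi_matrix_index [simp]:
  "i < n \<Longrightarrow> j < n \<Longrightarrow>
    jacobi_matrix G J e n p $$ (i, j) = J (e i \<otimes>\<^bsub>G\<^esub> inv\<^bsub>G\<^esub> e j) (p \<otimes>\<^bsub>G\<^esub> e j \<otimes>\<^bsub>G\<^esub> inv\<^bsub>G\<^esub> e i)"
  unfolding jacobi_matrix_def by simp

lemma (in comm_group) jacobi_matrix_mult:
  assumes jac: "jacobi_function G J" and e: "bij_betw e {..<n} (carrier G)"
    and p: "p \<in> carrier G" and q: "q \<in> carrier G"
  shows "jacobi_matrix G J e n p * jacobi_matrix G J e n q = jacobi_matrix G J e n (p \<otimes> q)"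
proof (rule eq_matI)
  fix i j assume "i < dim_row (jacobi_matrix G J e n (p \<otimes> q))" "j < dim_col (jacobi_matrix G J e n (p \<otimes> q))"
  then have ij: "i < n" "j < n"
    by simp_all
  then have ei: "e i \<in> carrier G" and ej: "e j \<in> carrier G"
    using e bij_betwE by blast+
  have "(jacobi_matrix G J e n p * jacobi_matrix G J e n q) $$ (i, j)
      = (\<Sum>l<n. J (e i \<otimes> inv e l) (p \<otimes> e l \<otimes> inv e i) * J (e l \<otimes> inv e j) (q \<otimes> e j \<otimes> inv e l))"
    using ij by (simp add: scalar_prod_def atLeast0LessThan)
  also have "\<dots> = (\<Sum>b\<in>carrier G. J (e i \<otimes> inv b) (p \<otimes> b \<otimes> inv e i) * J (b \<otimes> inv e j) (q \<otimes> e j \<otimes> inv b))"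
    by (rule sum.reindex_bij_betw[OF e])
  also have "\<dots> = (\<Sum>b\<in>carrier G. J ((p \<otimes> inv e i) \<otimes> b) (e i \<otimes> inv b) * J (inv e j \<otimes> b) ((q \<otimes> e j) \<otimes> inv b))"
  proof (rule sum.cong[OF refl])
    fix b assume b: "b \<in> carrier G"
    have "J (e i \<otimes> inv b) (p \<otimes> b \<otimes> inv e i) = J ((p \<otimes> inv e i) \<otimes> b) (e i \<otimes> inv b)"
      using jacobi_function_commute[OF jac] b ei p by (simp add: m_ac)
    moreover have "b \<otimes> inv e j = inv e j \<otimes> b"
      using b ej by (simp add: m_comm)
    ultimately show "J (e i \<otimes> inv b) (p \<otimes> b \<otimes> inv e i) * J (b \<otimes> inv e j) (q \<otimes> e j \<otimes> inv b)
      = J ((p \<otimes> inv e i) \<otimes> b) (e i \<otimes> inv b) * J (inv e j \<otimes> b) ((q \<otimes> e j) \<otimes> inv b)"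
      by simp
  qed
  also have "\<dots> = J ((p \<otimes> inv e i) \<otimes> (q \<otimes> e j)) (e i \<otimes> inv e j)"
    using ei ej p q by (intro jacobi_function_convolution[OF jac]) auto
  also have "\<dots> = J (e i \<otimes> inv e j) (p \<otimes> q \<otimes> e j \<otimes> inv e i)"
    using jacobi_function_commute[OF jac] ei ej p q by (simp add: m_ac)
  also have "\<dots> = jacobi_matrix G J e n (p \<otimes> q) $$ (i, j)"
    using ij by simp
  finally show "(jacobi_matrix G J e n p * jacobi_matrix G J e n q) $$ (i, j)
      = jacobi_matrix G J e n (p \<otimes> q) $$ (i, j)" .
qed simp_all

lemma (in comm_group) jacobi_matrix_pow_Suc:
  assumes jac: "jacobi_function G J" and e: "bij_betw e {..<n} (carrier G)"
    and p: "p \<in> carrier G"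
  shows "jacobi_matrix G J e n p ^\<^sub>m Suc k = jacobi_matrix G J e n (p [^] Suc k)"
proof (induction k)
  case 0
  show ?case using p by simp
next
  case (Suc k)
  then have "jacobi_matrix G J e n p ^\<^sub>m Suc (Suc k) = jacobi_matrix G J e n (p [^] Suc k \<otimes> p)"
    using p by (simp add: jacobi_matrix_mult[OF jac e])
  also have "p [^] Suc k \<otimes> p = p [^] Suc (Suc k)"
    by simp
  finally show ?case .
qed

lemma (in group) trace_jacobi_matrix:
  assumes e: "bij_betw e {..<n} (carrier G)" and p: "p \<in> carrier G"
  shows "trace_mat (jacobi_matrix G J e n p) = of_nat n * J \<one> p"
proof -
  have "J (e i \<otimes> inv e i) (p \<otimes> e i \<otimes> inv e i) = J \<one> p" if "i < n" for i
    using that e p bij_betwE by (fastforce simp: m_assoc)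
  then show ?thesis
    by (simp add: trace_mat_eq_sum)
qed

theorem mainTheorem8:
  fixes G :: "('a, 'b) monoid_scheme" and J :: "'a \<Rightarrow> 'a \<Rightarrow> complex"
  assumes "comm_group G" and "finite (carrier G)" and "jacobi_function G J"
    and "\<alpha> \<in> carrier G" and "\<alpha> \<noteq> \<one>\<^bsub>G\<^esub>"
  shows "jstar G J \<one>\<^bsub>G\<^esub> \<alpha> \<noteq> 0"
proof
  interpret comm_group G by fact
  assume "jstar G J \<one>\<^bsub>G\<^esub> \<alpha> = 0"
  with assms(5) have J_one: "J \<one>\<^bsub>G\<^esub> \<alpha> = 1"
    by (simp add: jstar_def jdelta_def)
  define n where "n = card (carrier G)"
  obtain e where e: "bij_betw e {..<n} (carrier G)"
    using ex_bij_betw_nat_finite[OF assms(2)] unfolding n_def atLeast0LessThan by blast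
  have "0 < n"
    using assms(2,4) unfolding n_def by (auto simp: card_gt_0_iff)
  have "\<alpha> [^]\<^bsub>G\<^esub> Suc n = \<alpha>"
    using pow_order_eq_1[OF assms(4)] assms(4) unfolding n_def order_def by simp
  then have "jacobi_matrix G J e n \<alpha> ^\<^sub>m Suc n = jacobi_matrix G J e n \<alpha>"
    by (simp only: jacobi_matrix_pow_Suc[OF assms(3) e assms(4)])
  moreover have "trace_mat (jacobi_matrix G J e n \<alpha>) = of_nat n"
    using J_one by (simp add: trace_jacobi_matrix[OF e assms(4)])
  ultimately have "jacobi_matrix G J e n \<alpha> = 1\<^sub>m n"
    by (rule one_mat_if_pow_Suc_eq_self_trace_eq_dim[OF jacobi_matrix_carrier \<open>0 < n\<close>])
  moreover obtain i j where "i < n" "e i = \<alpha>" "j < n" "e j = \<one>\<^bsub>G\<^esub>"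
    using assms(4) one_closed bij_betw_imp_surj_on[OF e] by (metis imageE lessThan_iff)
  ultimately have "J \<alpha> \<one>\<^bsub>G\<^esub> = 0"
    using assms(4,5) jacobi_matrix_index[of i n j G J e \<alpha>] by (auto simp: r_inv split: if_splits)
  with J_one jacobi_function_commute[OF assms(3) assms(4) one_closed] show False
    by simp
qed

end
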